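(* In the setting of the context, let $\mu^*\in W_1$. Given $n\ge1$ and $\alpha\in\mathcal{I}_n(f_{\mu^*})$, there exist $c=c(\alpha)>0$ and $\delta=\delta(\alpha)>0$ such that for every $\mu$ with $\|\mu-\mu^*\|<\delta$ (and $\|\mu-\mu^*\|<1$) we have $\alpha\in\mathcal{I}_n(f_\mu)$ and $d_H(A^\alpha_\mu,A^\alpha_{\mu^*})\le c\|\mu-\mu^*\|$.
   Context: $X\subset\mathbb{R}^d$ is a compact convex polytope (possibly not full-dimensional) with relative interior $\mathrm{relint}(X)$. $\ell\ge1$, $\mathcal{A}=\{-1,1\}^\ell$, $\varphi_i(x)=\Lambda_ix+b_i$ ($i\in\mathcal{A}$) with $\Lambda_i\in GL_d(\mathbb{R})$, $\|\Lambda_i\|<1$ in some operator norm, and $\varphi_i(X)\subset\mathrm{relint}(X)$. $v^{(1)},\dots,v^{(\ell)}$ are unit vectors in $\mathbb{R}^d$, $H_j(\mu)=\{x:\langle v^{(j)},x\rangle=\mu_j\}$. Label map: $\sigma_\mu(x)=(s_1(x),\dots,s_\ell(x))$, $s_j(x)=-1$ if $\langle v^{(j)},x\rangle\le\mu_j$ and $1$ otherwise; $f_\mu(x)=\varphi_{\sigma_\mu(x)}(x)$ on $X$. $A_{i,\mu}=\mathrm{relint}(X)\cap\mathrm{relint}(\{x\in X:\sigma_\mu(x)=i\})$. For $\alpha=(i_0,\dots,i_{n-1})$: $A^\alpha_\mu=A_{i_0,\mu}\cap\varphi_{i_0}^{-1}(A_{i_1,\mu})\cap\cdots\cap(\varphi_{i_{n-2}}\circ\cdots\circ\varphi_{i_0})^{-1}(A_{i_{n-1},\mu})$.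 $\mathcal{I}_n(f_\mu)=\{\alpha\in\mathcal{A}^n:A^\alpha_\mu\ne\emptyset\}$ (the itineraries of order $n$). $Z_\alpha=\{\mu\in\mathbb{R}^\ell:A^\alpha_\mu\neq\emptyset\}$ and $W_1=\mathbb{R}^\ell\setminus\bigcup_{n\ge1}\bigcup_{\alpha\in\mathcal{A}^n}\partial Z_\alpha$. $d_H$ is the Hausdorff distance (with respect to the Euclidean metric). *)

theory Defs
  imports "HOL-Analysis.Analysis"
begin

definition labels :: "('l \<Rightarrow> int) set" where
  "labels = {i. \<forall>j. i j \<in> {-1, 1}}"

definition is_norm_fun :: "('a::real_vector \<Rightarrow> real) \<Rightarrow> bool" where
  "is_norm_fun N \<longleftrightarrow> (\<forall>x. 0 \<le> N x) \<and> (\<forall>x. N x = 0 \<longleftrightarrow> x = 0)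
     \<and> (\<forall>c x. N (c *\<^sub>R x) = \<bar>c\<bar> * N x) \<and> (\<forall>x y. N (x + y) \<le> N x + N y)"

definition sigma :: "('l \<Rightarrow> 'a::real_inner) \<Rightarrow> real^'l::finite \<Rightarrow> 'a \<Rightarrow> ('l \<Rightarrow> int)" where
  "sigma v \<mu> x = (\<lambda>j. if v j \<bullet> x \<le> \<mu> $ j then -1 else 1)"

definition phi :: "(('l \<Rightarrow> int) \<Rightarrow> 'a \<Rightarrow> 'a) \<Rightarrow> (('l \<Rightarrow> int) \<Rightarrow> 'a::real_vector) \<Rightarrow> ('l \<Rightarrow> int) \<Rightarrow> 'a \<Rightarrow> 'a" where
  "phi Lam b i x = Lam i x + b i"

definition fmap where
  "fmap Lam b v \<mu> x = phi Lam b (sigma v \<mu> x) x"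

definition Aset :: "'a::euclidean_space set \<Rightarrow> ('l \<Rightarrow> 'a) \<Rightarrow> ('l \<Rightarrow> int) \<Rightarrow> real^'l::finite \<Rightarrow> 'a set" where
  "Aset X v i \<mu> = rel_interior X \<inter> rel_interior {x \<in> X. sigma v \<mu> x = i}"

fun cyl :: "'a::euclidean_space set \<Rightarrow> (('l \<Rightarrow> int) \<Rightarrow> 'a \<Rightarrow> 'a) \<Rightarrow> (('l \<Rightarrow> int) \<Rightarrow> 'a)
     \<Rightarrow> ('l \<Rightarrow> 'a) \<Rightarrow> ('l \<Rightarrow> int) list \<Rightarrow> real^'l::finite \<Rightarrow> 'a set" where
  "cyl X Lam b v [] \<mu> = UNIV"
| "cyl X Lam b v (i # \<alpha>) \<mu> = Aset X v i \<mu> \<inter> {x. phi Lam b i x \<in> cyl X Lam b v \<alpha> \<mu>}"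

definition itineraries where
  "itineraries X Lam b v n \<mu> =
     {\<alpha>. length \<alpha> = n \<and> set \<alpha> \<subseteq> labels \<and> cyl X Lam b v \<alpha> \<mu> \<noteq> {}}"

definition Zset where
  "Zset X Lam b v \<alpha> = {\<mu>. cyl X Lam b v \<alpha> \<mu> \<noteq> {}}"

definition W1 :: "'a::euclidean_space set \<Rightarrow> (('l \<Rightarrow> int) \<Rightarrow> 'a \<Rightarrow> 'a) \<Rightarrow> (('l \<Rightarrow> int) \<Rightarrow> 'a)
     \<Rightarrow> ('l \<Rightarrow> 'a) \<Rightarrow> (real^'l::finite) set" where
  "W1 X Lam b v = UNIV - (\<Union>n\<in>{1..}. \<Union>\<alpha>\<in>{\<alpha>. length \<alpha> = n \<and> set \<alpha> \<subseteq> labels}.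
                          frontier (Zset X Lam b v \<alpha>))"

definition hausdorff_dist :: "'a::metric_space set \<Rightarrow> 'a set \<Rightarrow> real" where
  "hausdorff_dist A B = max (SUP a\<in>A. infdist a B) (SUP b\<in>B. infdist b A)"

end

theory Submission
  imports Defs
begin

text \<open>Replacing the strict inequalities and relative interiors in the definition of
  \<open>A\<^sup>\<alpha>\<^sub>\<mu>\<close> by non-strict inequalities gives closed cylinders
  \<open>Q\<^sup>\<alpha>\<^sub>\<mu>\<close> whose graph \<open>{(x, \<mu>). x \<in> Q\<^sup>\<alpha>\<^sub>\<mu>}\<close> is convex, and
  \<open>Q\<^sup>\<alpha>\<^sub>\<mu>\<close> lies in the closure of \<open>A\<^sup>\<alpha>\<^sub>\<mu>\<close> as soon as the latter is nonempty.
  Hence for \<open>x \<in> A\<^sup>\<alpha>\<^sub>\<mu>\<^sub>1\<close> and \<open>y \<in> A\<^sup>\<alpha>\<^sub>\<mu>\<^sub>2\<close> the point \<open>(1-t)x + ty\<close>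
  is a limit of points of \<open>A\<^sup>\<alpha>\<close> at the parameter \<open>(1-t)\<mu>\<^sub>1 + t\<mu>\<^sub>2\<close>, provided
  that cylinder is nonempty.
  Since \<open>\<mu>* \<in> W\<^sub>1\<close>, the cylinder \<open>A\<^sup>\<alpha>\<^sub>\<mu>\<close> is nonempty for \<open>\<mu>\<close> in a ball of radius
  \<open>r\<close> around \<open>\<mu>*\<close>. Interpolating between \<open>\<mu>*\<close> (resp. \<open>\<mu>\<close>) and a parameter at distance
  \<open>r/2\<close> from \<open>\<mu>*\<close> on the line through \<open>\<mu>*\<close> and \<open>\<mu>\<close> bounds both halves of the
  Hausdorff distance by \<open>2 diam(X) \<parallel>\<mu> - \<mu>*\<parallel> / r\<close>.\<close>

lemma closure_if_half_open_segment_subset: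
  fixes p q :: "'a::real_normed_vector"
  assumes "\<And>s. 0 < s \<Longrightarrow> s \<le> 1 \<Longrightarrow> (1 - s) *\<^sub>R q + s *\<^sub>R p \<in> S"
  shows "q \<in> closure S"
proof -
  define z where "z n = (1 - inverse (real (Suc n))) *\<^sub>R q + inverse (real (Suc n)) *\<^sub>R p" for n
  have "z \<longlonglongrightarrow> (1 - 0) *\<^sub>R q + 0 *\<^sub>R p"
    unfolding z_def by (intro tendsto_intros LIMSEQ_inverse_real_of_nat)
  moreover have "z n \<in> S" for n
    unfolding z_def by (rule assms) (auto simp: field_simps)
  ultimately show ?thesis
    unfolding closure_sequential by auto
qed

lemma infdist_le_dist_closure:
  assumes "z \<in> closure A"
  shows "infdist x A \<le> dist x z"
proof -
  have "A \<noteq> {}" using assms by auto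
  then have "infdist z A = 0" using assms in_closure_iff_infdist_zero by blast
  then show ?thesis using infdist_triangle[of x A z] by simp
qed

lemma SUP_infdist_le_if_interpolating:
  fixes F :: "'m::real_vector \<Rightarrow> 'a::real_normed_vector set"
  assumes graph_convex: "\<And>\<mu>1 \<mu>2 x y t. x \<in> F \<mu>1 \<Longrightarrow> y \<in> F \<mu>2 \<Longrightarrow> 0 \<le> t \<Longrightarrow> t \<le> 1 \<Longrightarrow>
        F ((1 - t) *\<^sub>R \<mu>1 + t *\<^sub>R \<mu>2) \<noteq> {} \<Longrightarrow>
        (1 - t) *\<^sub>R x + t *\<^sub>R y \<in> closure (F ((1 - t) *\<^sub>R \<mu>1 + t *\<^sub>R \<mu>2))"
    and diam: "\<And>\<mu>1 \<mu>2 x y. x \<in> F \<mu>1 \<Longrightarrow> y \<in> F \<mu>2 \<Longrightarrow> dist x y \<le> D"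
    and "y \<in> F \<mu>b" "F \<mu>a \<noteq> {}" "F \<mu> \<noteq> {}"
    and "\<mu> = (1 - t) *\<^sub>R \<mu>a + t *\<^sub>R \<mu>b" "0 \<le> t" "t \<le> 1"
  shows "(SUP x\<in>F \<mu>a. infdist x (F \<mu>)) \<le> t * D"
proof (rule cSUP_least)
  fix x assume x: "x \<in> F \<mu>a"
  have "infdist x (F \<mu>) \<le> dist x ((1 - t) *\<^sub>R x + t *\<^sub>R y)"
    using assms x by (intro infdist_le_dist_closure) simp
  also have "\<dots> = norm (t *\<^sub>R (x - y))"
    by (simp add: dist_norm algebra_simps)
  also have "\<dots> = t * dist x y"
    using \<open>0 \<le> t\<close> by (simp add: dist_norm)
  also have "\<dots> \<le> t * D"
    using diam[OF x \<open>y \<in> F \<mu>b\<close>] \<open>0 \<le> t\<close> by (simp add: mult_left_mono)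
  finally show "infdist x (F \<mu>) \<le> t * D" .
qed (fact \<open>F \<mu>a \<noteq> {}\<close>)

lemma hausdorff_dist_le_if_graph_convex:
  fixes F :: "'m::real_normed_vector \<Rightarrow> 'a::real_normed_vector set"
  assumes graph_convex: "\<And>\<mu>1 \<mu>2 x y t. x \<in> F \<mu>1 \<Longrightarrow> y \<in> F \<mu>2 \<Longrightarrow> 0 \<le> t \<Longrightarrow> t \<le> 1 \<Longrightarrow>
        F ((1 - t) *\<^sub>R \<mu>1 + t *\<^sub>R \<mu>2) \<noteq> {} \<Longrightarrow>
        (1 - t) *\<^sub>R x + t *\<^sub>R y \<in> closure (F ((1 - t) *\<^sub>R \<mu>1 + t *\<^sub>R \<mu>2))"
    and diam: "\<And>\<mu>1 \<mu>2 x y. x \<in> F \<mu>1 \<Longrightarrow> y \<in> F \<mu>2 \<Longrightarrow> dist x y \<le> D"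
    and nonempty: "\<And>\<mu>'. dist \<mu>' \<mu>s < r \<Longrightarrow> F \<mu>' \<noteq> {}"
    and close: "dist \<mu> \<mu>s < r / 2"
  shows "hausdorff_dist (F \<mu>) (F \<mu>s) \<le> 2 * D / r * dist \<mu> \<mu>s"
proof -
  define \<epsilon> where "\<epsilon> = dist \<mu> \<mu>s"
  define u where "u = \<mu> - \<mu>s"
  define k where "k = r / (2 * \<epsilon>)" \<comment> \<open>\<open>k = 0\<close> if \<open>\<mu> = \<mu>s\<close>, where everything degenerates\<close>
  define t where "t = 2 * \<epsilon> / r"
  define s where "s = 2 * \<epsilon> / (r + 2 * \<epsilon>)"
  have "0 \<le> \<epsilon>" by (simp add: \<epsilon>_def)
  then have "0 < r" using close unfolding \<epsilon>_def by linarith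
  have ne: "F \<mu> \<noteq> {}" "F \<mu>s \<noteq> {}" using nonempty close \<open>0 < r\<close> by auto
  then obtain x where "x \<in> F \<mu>" by blast
  then have "0 \<le> D" using diam[of x \<mu> x \<mu>] by simp
  have t: "0 \<le> t" "t \<le> 1" using close \<open>0 \<le> \<epsilon>\<close> \<open>0 < r\<close> by (auto simp: t_def \<epsilon>_def)
  have s: "0 \<le> s" "s \<le> t" using \<open>0 \<le> \<epsilon>\<close> \<open>0 < r\<close> by (auto simp: s_def t_def frac_le)
  have far: "dist (\<mu>s + c *\<^sub>R k *\<^sub>R u) \<mu>s < r" if "\<bar>c\<bar> = 1" for c
  proof (cases "\<epsilon> = 0")
    case False
    then have "dist (\<mu>s + c *\<^sub>R k *\<^sub>R u) \<mu>s = r / 2"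
      using that \<open>0 \<le> \<epsilon>\<close> \<open>0 < r\<close> by (simp add: dist_norm k_def u_def \<epsilon>_def abs_mult)
    then show ?thesis using \<open>0 < r\<close> by simp
  qed (use \<open>0 < r\<close> in \<open>simp add: k_def\<close>)
  have "(t * k) *\<^sub>R u = u \<and> (s * (1 + k)) *\<^sub>R u = u"
  proof (cases "\<epsilon> = 0")
    case True
    then show ?thesis by (simp add: u_def \<epsilon>_def)
  next
    case False
    then have "t * k = 1" "s * (1 + k) = 1"
      using \<open>0 < r\<close> \<open>0 \<le> \<epsilon>\<close> by (simp_all add: t_def s_def k_def divide_simps)
    then show ?thesis by simp
  qed
  then have \<mu>_between: "\<mu> = (1 - t) *\<^sub>R \<mu>s + t *\<^sub>R (\<mu>s + k *\<^sub>R u)"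
    and \<mu>s_between: "\<mu>s = (1 - s) *\<^sub>R \<mu> + s *\<^sub>R (\<mu>s - k *\<^sub>R u)"
    by (auto simp: u_def algebra_simps)
  obtain yb yc where yb: "yb \<in> F (\<mu>s + k *\<^sub>R u)" and yc: "yc \<in> F (\<mu>s - k *\<^sub>R u)"
    using nonempty far[of 1] far[of "-1"] by fastforce
  have "(SUP x\<in>F \<mu>s. infdist x (F \<mu>)) \<le> t * D"
    using graph_convex diam yb ne(2,1) \<mu>_between t
    by (rule SUP_infdist_le_if_interpolating[of F])
  moreover have "(SUP x\<in>F \<mu>. infdist x (F \<mu>s)) \<le> s * D"
    using graph_convex diam yc ne \<mu>s_between s(1) order_trans[OF s(2) t(2)]
    by (rule SUP_infdist_le_if_interpolating[of F])
  moreover have "s * D \<le> t * D" using s \<open>0 \<le> D\<close> by (simp add: mult_right_mono)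
  moreover have "t * D = 2 * D / r * dist \<mu> \<mu>s" by (simp add: t_def \<epsilon>_def)
  ultimately show ?thesis unfolding hausdorff_dist_def by (intro max.boundedI) linarith+
qed

definition closed_label_region ::
    "'a::euclidean_space set \<Rightarrow> ('l \<Rightarrow> 'a) \<Rightarrow> ('l \<Rightarrow> int) \<Rightarrow> real^'l::finite \<Rightarrow> 'a set" where
  "closed_label_region X v i \<mu> =
     {x \<in> X. \<forall>j. (i j = -1 \<longrightarrow> v j \<bullet> x \<le> \<mu>$j) \<and> (i j = 1 \<longrightarrow> \<mu>$j \<le> v j \<bullet> x)}"

lemma label_region_subset_closed:
  "{x \<in> X. sigma v \<mu> x = i} \<subseteq> closed_label_region X v i \<mu>"
  by (auto simp: closed_label_region_def sigma_def split: if_splits)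

lemma sigma_half_open_segment:
  assumes p: "sigma v \<mu> p = i" and q: "q \<in> closed_label_region X v i \<mu>" and "0 < s" "s \<le> 1"
  shows "sigma v \<mu> ((1 - s) *\<^sub>R q + s *\<^sub>R p) = i"
proof
  fix j
  have inner: "v j \<bullet> ((1 - s) *\<^sub>R q + s *\<^sub>R p) = (1 - s) * (v j \<bullet> q) + s * (v j \<bullet> p)"
    by (simp add: inner_add_right)
  have split: "\<mu>$j = (1 - s) * \<mu>$j + s * \<mu>$j" by (simp add: algebra_simps)
  show "sigma v \<mu> ((1 - s) *\<^sub>R q + s *\<^sub>R p) j = i j"
  proof (cases "v j \<bullet> p \<le> \<mu>$j")
    case True
    then have "i j = -1" using p by (auto simp: sigma_def)
    then have "v j \<bullet> q \<le> \<mu>$j" using q by (simp add: closed_label_region_def)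
    then have "(1 - s) * (v j \<bullet> q) + s * (v j \<bullet> p) \<le> (1 - s) * \<mu>$j + s * \<mu>$j"
      using True \<open>0 < s\<close> \<open>s \<le> 1\<close> by (intro add_mono mult_left_mono) auto
    then show ?thesis using \<open>i j = -1\<close> split by (simp add: sigma_def inner)
  next
    case False
    then have "i j = 1" using p by (auto simp: sigma_def)
    then have "\<mu>$j \<le> v j \<bullet> q" using q by (simp add: closed_label_region_def)
    then have "(1 - s) * \<mu>$j + s * \<mu>$j < (1 - s) * (v j \<bullet> q) + s * (v j \<bullet> p)"
      using False \<open>0 < s\<close> \<open>s \<le> 1\<close> by (intro add_le_less_mono mult_left_mono) auto
    then show ?thesis using \<open>i j = 1\<close> split by (simp add: sigma_def inner)
  qed
qed

lemma label_region_half_open_segment: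
  assumes "convex X" "p \<in> X" "sigma v \<mu> p = i" "q \<in> closed_label_region X v i \<mu>" "0 < s" "s \<le> 1"
  shows "(1 - s) *\<^sub>R q + s *\<^sub>R p \<in> {x \<in> X. sigma v \<mu> x = i}"
proof -
  have "(1 - s) *\<^sub>R q + s *\<^sub>R p \<in> X"
    using assms by (intro convexD) (auto simp: closed_label_region_def)
  then show ?thesis using sigma_half_open_segment[OF assms(3,4,5,6)] by simp
qed

lemma convex_label_region:
  fixes X :: "'a::euclidean_space set"
  assumes "convex X"
  shows "convex {x \<in> X. sigma v \<mu> x = i}"
  unfolding convex_alt
proof (intro ballI allI impI)
  fix x y and u :: real
  assume x: "x \<in> {x \<in> X. sigma v \<mu> x = i}" and y: "y \<in> {x \<in> X. sigma v \<mu> x = i}"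
    and u: "0 \<le> u \<and> u \<le> 1"
  show "(1 - u) *\<^sub>R x + u *\<^sub>R y \<in> {x \<in> X. sigma v \<mu> x = i}"
  proof (cases "u = 0")
    case False
    have "x \<in> closed_label_region X v i \<mu>" using x label_region_subset_closed by blast
    moreover have "0 < u" using u False by simp
    ultimately show ?thesis
      using label_region_half_open_segment[OF assms, of y v \<mu> i x u] y u by blast
  qed (use x in simp)
qed

lemma closed_label_region_subset_closure:
  fixes X :: "'a::euclidean_space set"
  assumes "convex X" "{x \<in> X. sigma v \<mu> x = i} \<noteq> {}"
  shows "closed_label_region X v i \<mu> \<subseteq> closure {x \<in> X. sigma v \<mu> x = i}"
proof
  fix q assume "q \<in> closed_label_region X v i \<mu>"
  moreover obtain p where "p \<in> X" "sigma v \<mu> p = i" using assms(2) by blast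
  ultimately show "q \<in> closure {x \<in> X. sigma v \<mu> x = i}"
    using label_region_half_open_segment[OF assms(1)] by (intro closure_if_half_open_segment_subset)
qed

lemma closed_label_region_convex_combination:
  assumes "convex X" "x \<in> closed_label_region X v i \<mu>1" "y \<in> closed_label_region X v i \<mu>2"
    "0 \<le> t" "t \<le> 1"
  shows "(1 - t) *\<^sub>R x + t *\<^sub>R y \<in> closed_label_region X v i ((1 - t) *\<^sub>R \<mu>1 + t *\<^sub>R \<mu>2)"
proof -
  have "(1 - t) *\<^sub>R x + t *\<^sub>R y \<in> X"
    using assms by (intro convexD) (auto simp: closed_label_region_def)
  moreover have
    "(i j = -1 \<longrightarrow> v j \<bullet> ((1 - t) *\<^sub>R x + t *\<^sub>R y) \<le> ((1 - t) *\<^sub>R \<mu>1 + t *\<^sub>R \<mu>2)$j) \<and>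
     (i j = 1 \<longrightarrow> ((1 - t) *\<^sub>R \<mu>1 + t *\<^sub>R \<mu>2)$j \<le> v j \<bullet> ((1 - t) *\<^sub>R x + t *\<^sub>R y))" for j
  proof -
    have "v j \<bullet> ((1 - t) *\<^sub>R x + t *\<^sub>R y) = (1 - t) * (v j \<bullet> x) + t * (v j \<bullet> y)"
      by (simp add: inner_add_right)
    moreover have "((1 - t) *\<^sub>R \<mu>1 + t *\<^sub>R \<mu>2)$j = (1 - t) * \<mu>1$j + t * \<mu>2$j" by simp
    ultimately show ?thesis
      using assms unfolding closed_label_region_def by (auto intro!: add_mono mult_left_mono)
  qed
  ultimately show ?thesis by (simp add: closed_label_region_def)
qed

fun closed_cyl :: "'a::euclidean_space set \<Rightarrow> (('l \<Rightarrow> int) \<Rightarrow> 'a \<Rightarrow> 'a) \<Rightarrow> (('l \<Rightarrow> int) \<Rightarrow> 'a)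
     \<Rightarrow> ('l \<Rightarrow> 'a) \<Rightarrow> ('l \<Rightarrow> int) list \<Rightarrow> real^'l::finite \<Rightarrow> 'a set" where
  "closed_cyl X Lam b v [] \<mu> = UNIV"
| "closed_cyl X Lam b v (i # \<alpha>) \<mu> =
     closed_label_region X v i \<mu> \<inter> {x. phi Lam b i x \<in> closed_cyl X Lam b v \<alpha> \<mu>}"

lemma Aset_subset_closed_label_region: "Aset X v i \<mu> \<subseteq> closed_label_region X v i \<mu>"
  using rel_interior_subset label_region_subset_closed unfolding Aset_def by blast

lemma cyl_subset_closed_cyl: "cyl X Lam b v \<alpha> \<mu> \<subseteq> closed_cyl X Lam b v \<alpha> \<mu>"
  by (induction \<alpha>) (use Aset_subset_closed_label_region in fastforce)+

lemma cyl_subset: "\<alpha> \<noteq> [] \<Longrightarrow> cyl X Lam b v \<alpha> \<mu> \<subseteq> X"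
  by (cases \<alpha>) (auto simp: Aset_def dest: rel_interior_subset[THEN subsetD])

lemma phi_convex_combination:
  assumes "linear (Lam i)"
  shows "phi Lam b i ((1 - t) *\<^sub>R x + t *\<^sub>R y) = (1 - t) *\<^sub>R phi Lam b i x + t *\<^sub>R phi Lam b i y"
proof -
  have "Lam i ((1 - t) *\<^sub>R x + t *\<^sub>R y) = (1 - t) *\<^sub>R Lam i x + t *\<^sub>R Lam i y"
    by (simp only: linear_add[OF assms] linear_scale[OF assms])
  then show ?thesis by (simp add: phi_def algebra_simps)
qed

lemma cyl_half_open_segment:
  assumes X: "convex X" and lin: "\<And>i. i \<in> labels \<Longrightarrow> linear (Lam i)"
  shows "set \<alpha> \<subseteq> labels \<Longrightarrow> p \<in> cyl X Lam b v \<alpha> \<mu> \<Longrightarrow> q \<in> closed_cyl X Lam b v \<alpha> \<mu> \<Longrightarrow>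
    0 < s \<Longrightarrow> s \<le> 1 \<Longrightarrow> (1 - s) *\<^sub>R q + s *\<^sub>R p \<in> cyl X Lam b v \<alpha> \<mu>"
proof (induction \<alpha> arbitrary: p q)
  case (Cons i \<alpha>)
  let ?E = "{x \<in> X. sigma v \<mu> x = i}"
  have p: "p \<in> rel_interior X" "p \<in> rel_interior ?E" "phi Lam b i p \<in> cyl X Lam b v \<alpha> \<mu>"
    and q: "q \<in> closed_label_region X v i \<mu>" "phi Lam b i q \<in> closed_cyl X Lam b v \<alpha> \<mu>"
    using Cons.prems by (auto simp: Aset_def)
  have shrink: "(1 - s) *\<^sub>R q + s *\<^sub>R p = q - s *\<^sub>R (q - p)" by (simp add: algebra_simps)
  have "q \<in> closure X" using q(1) closure_subset by (auto simp: closed_label_region_def)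
  then have "(1 - s) *\<^sub>R q + s *\<^sub>R p \<in> rel_interior X"
    unfolding shrink using rel_interior_closure_convex_shrink[OF X p(1)] Cons.prems by blast
  moreover have "q \<in> closure ?E"
    using closed_label_region_subset_closure[OF X] q(1) p(2) rel_interior_subset by blast
  then have "(1 - s) *\<^sub>R q + s *\<^sub>R p \<in> rel_interior ?E"
    unfolding shrink
    using rel_interior_closure_convex_shrink[OF convex_label_region[OF X] p(2)] Cons.prems by blast
  moreover have "phi Lam b i ((1 - s) *\<^sub>R q + s *\<^sub>R p) \<in> cyl X Lam b v \<alpha> \<mu>"
    using Cons.IH[OF _ p(3) q(2)] Cons.prems lin by (simp add: phi_convex_combination)
  ultimately show ?case by (simp add: Aset_def)
qed simp

lemma closed_cyl_subset_closure_cyl: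
  assumes "convex X" "\<And>i. i \<in> labels \<Longrightarrow> linear (Lam i)" "set \<alpha> \<subseteq> labels"
    and "cyl X Lam b v \<alpha> \<mu> \<noteq> {}"
  shows "closed_cyl X Lam b v \<alpha> \<mu> \<subseteq> closure (cyl X Lam b v \<alpha> \<mu>)"
proof
  fix q assume "q \<in> closed_cyl X Lam b v \<alpha> \<mu>"
  moreover obtain p where "p \<in> cyl X Lam b v \<alpha> \<mu>" using assms(4) by blast
  ultimately show "q \<in> closure (cyl X Lam b v \<alpha> \<mu>)"
    using cyl_half_open_segment[where Lam = Lam, OF assms(1-3)]
    by (intro closure_if_half_open_segment_subset)
qed

lemma closed_cyl_convex_combination:
  assumes X: "convex X" and lin: "\<And>i. i \<in> labels \<Longrightarrow> linear (Lam i)"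
  shows "set \<alpha> \<subseteq> labels \<Longrightarrow> x \<in> closed_cyl X Lam b v \<alpha> \<mu>1 \<Longrightarrow> y \<in> closed_cyl X Lam b v \<alpha> \<mu>2 \<Longrightarrow>
    0 \<le> t \<Longrightarrow> t \<le> 1 \<Longrightarrow>
    (1 - t) *\<^sub>R x + t *\<^sub>R y \<in> closed_cyl X Lam b v \<alpha> ((1 - t) *\<^sub>R \<mu>1 + t *\<^sub>R \<mu>2)"
proof (induction \<alpha> arbitrary: x y)
  case (Cons i \<alpha>)
  have "(1 - t) *\<^sub>R x + t *\<^sub>R y \<in> closed_label_region X v i ((1 - t) *\<^sub>R \<mu>1 + t *\<^sub>R \<mu>2)"
    using Cons.prems by (intro closed_label_region_convex_combination[OF X]) auto
  moreover have "phi Lam b i ((1 - t) *\<^sub>R x + t *\<^sub>R y) \<in> closed_cyl X Lam b v \<alpha> ((1 - t) *\<^sub>R \<mu>1 + t *\<^sub>R \<mu>2)"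
    using Cons.IH Cons.prems lin by (simp add: phi_convex_combination)
  ultimately show ?case by simp
qed simp

lemma cyl_convex_combination_in_closure:
  assumes "convex X" "\<And>i. i \<in> labels \<Longrightarrow> linear (Lam i)" "set \<alpha> \<subseteq> labels"
    and "x \<in> cyl X Lam b v \<alpha> \<mu>1" "y \<in> cyl X Lam b v \<alpha> \<mu>2" "0 \<le> t" "t \<le> 1"
    and "cyl X Lam b v \<alpha> ((1 - t) *\<^sub>R \<mu>1 + t *\<^sub>R \<mu>2) \<noteq> {}"
  shows "(1 - t) *\<^sub>R x + t *\<^sub>R y \<in> closure (cyl X Lam b v \<alpha> ((1 - t) *\<^sub>R \<mu>1 + t *\<^sub>R \<mu>2))"
  using closed_cyl_convex_combination[where Lam = Lam, OF assms(1-3)] cyl_subset_closed_cyl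
    closed_cyl_subset_closure_cyl[where Lam = Lam, OF assms(1-3,8)] assms(4-7) by blast

lemma cyl_nonempty_near_if_W1:
  assumes "\<mu>s \<in> W1 X Lam b v" "\<alpha> \<noteq> []" "set \<alpha> \<subseteq> labels" "cyl X Lam b v \<alpha> \<mu>s \<noteq> {}"
  obtains r where "r > 0" "\<And>\<mu>. dist \<mu> \<mu>s < r \<Longrightarrow> cyl X Lam b v \<alpha> \<mu> \<noteq> {}"
proof -
  have "length \<alpha> \<in> {1..}" using assms(2) by (cases \<alpha>) auto
  then have "\<mu>s \<notin> frontier (Zset X Lam b v \<alpha>)"
    using assms(1,3) unfolding W1_def by blast
  moreover have "\<mu>s \<in> Zset X Lam b v \<alpha>" using assms(4) by (simp add: Zset_def)
  ultimately have "\<mu>s \<in> interior (Zset X Lam b v \<alpha>)"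
    using closure_subset unfolding frontier_def by blast
  then obtain r where "r > 0" and r: "ball \<mu>s r \<subseteq> Zset X Lam b v \<alpha>"
    using mem_interior by blast
  moreover have "cyl X Lam b v \<alpha> \<mu> \<noteq> {}" if "dist \<mu> \<mu>s < r" for \<mu>
  proof -
    have "\<mu> \<in> ball \<mu>s r" using that by (simp add: dist_commute)
    then show ?thesis using r by (auto simp: Zset_def)
  qed
  ultimately show ?thesis using that by blast
qed

lemma dist_cyl_le_diameter:
  assumes "bounded X" "\<alpha> \<noteq> []" "x \<in> cyl X Lam b v \<alpha> \<mu>1" "y \<in> cyl X Lam b v \<alpha> \<mu>2"
  shows "dist x y \<le> diameter X"
  using assms cyl_subset[OF \<open>\<alpha> \<noteq> []\<close>] by (blast intro: diameter_bounded_bound)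

theorem lemma5p4:
  fixes X :: "'a::euclidean_space set"
    and Lam :: "('l::finite \<Rightarrow> int) \<Rightarrow> 'a \<Rightarrow> 'a"
    and b :: "('l \<Rightarrow> int) \<Rightarrow> 'a"
    and v :: "'l \<Rightarrow> 'a"
    and \<mu>s :: "real^'l"
    and n :: nat
  assumes X_polytope: "polytope X"
    and Lam_linear: "\<And>i. i \<in> labels \<Longrightarrow> linear (Lam i)"
    and Lam_invertible: "\<And>i. i \<in> labels \<Longrightarrow> bij (Lam i)"
    and Lam_contr: "\<exists>N. is_norm_fun N \<and>
          (\<forall>i\<in>labels. \<exists>q<1. \<forall>x. N (Lam i x) \<le> q * N x)"
    and phi_into: "\<And>i. i \<in> labels \<Longrightarrow> phi Lam b i ` X \<subseteq> rel_interior X"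
    and v_unit: "\<And>j. norm (v j) = 1"
    and mus_W1: "\<mu>s \<in> W1 X Lam b v"
    and n_pos: "n \<ge> 1"
  shows "\<forall>\<alpha>\<in>itineraries X Lam b v n \<mu>s. \<exists>c>0. \<exists>\<delta>>0. \<forall>\<mu>.
            norm (\<mu> - \<mu>s) < \<delta> \<and> norm (\<mu> - \<mu>s) < 1 \<longrightarrow>
              \<alpha> \<in> itineraries X Lam b v n \<mu> \<and>
              hausdorff_dist (cyl X Lam b v \<alpha> \<mu>) (cyl X Lam b v \<alpha> \<mu>s) \<le> c * norm (\<mu> - \<mu>s)"
proof
  fix \<alpha> assume "\<alpha> \<in> itineraries X Lam b v n \<mu>s"
  then have len: "length \<alpha> = n" and lab: "set \<alpha> \<subseteq> labels" and "cyl X Lam b v \<alpha> \<mu>s \<noteq> {}"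
    by (auto simp: itineraries_def)
  moreover have "\<alpha> \<noteq> []" using len n_pos by auto
  ultimately obtain r where "r > 0" and nonempty: "\<And>\<mu>. dist \<mu> \<mu>s < r \<Longrightarrow> cyl X Lam b v \<alpha> \<mu> \<noteq> {}"
    using cyl_nonempty_near_if_W1[OF mus_W1] by blast
  have "convex X" "bounded X"
    using X_polytope polytope_imp_convex polytope_imp_compact compact_imp_bounded by auto
  define D where "D = diameter X + 1" \<comment> \<open>\<open>+ 1\<close> keeps the constant positive when \<open>X\<close> is a point\<close>
  have "0 < D" using diameter_ge_0[OF \<open>bounded X\<close>] by (simp add: D_def)
  have diam: "dist x y \<le> D" if "x \<in> cyl X Lam b v \<alpha> \<mu>1" "y \<in> cyl X Lam b v \<alpha> \<mu>2" for x y \<mu>1 \<mu>2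
    using dist_cyl_le_diameter[OF \<open>bounded X\<close> \<open>\<alpha> \<noteq> []\<close> that] by (simp add: D_def)
  have "hausdorff_dist (cyl X Lam b v \<alpha> \<mu>) (cyl X Lam b v \<alpha> \<mu>s) \<le> 2 * D / r * norm (\<mu> - \<mu>s)"
    if "norm (\<mu> - \<mu>s) < r / 2" for \<mu>
    using cyl_convex_combination_in_closure[where Lam = Lam, OF \<open>convex X\<close> Lam_linear lab] diam
      nonempty that
    by (subst dist_norm[symmetric]) (rule hausdorff_dist_le_if_graph_convex; simp add: dist_norm)
  moreover have "\<alpha> \<in> itineraries X Lam b v n \<mu>" if "norm (\<mu> - \<mu>s) < r / 2" for \<mu>
    using nonempty[of \<mu>] that \<open>r > 0\<close> len lab by (simp add: itineraries_def dist_norm)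
  ultimately show "\<exists>c>0. \<exists>\<delta>>0. \<forall>\<mu>. norm (\<mu> - \<mu>s) < \<delta> \<and> norm (\<mu> - \<mu>s) < 1 \<longrightarrow>
      \<alpha> \<in> itineraries X Lam b v n \<mu> \<and>
      hausdorff_dist (cyl X Lam b v \<alpha> \<mu>) (cyl X Lam b v \<alpha> \<mu>s) \<le> c * norm (\<mu> - \<mu>s)"
    using \<open>0 < D\<close> \<open>0 < r\<close> by (intro exI[of _ "2 * D / r"] conjI exI[of _ "r / 2"] allI impI) auto
qed

end
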